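(* For $k\ge0$ let $\Delta_k$ be the path graph with $2k+1$ vertices and $2k$ edges (vertices labeled consecutively along the path), so $\Delta_0$ is a single vertex. Then, as formal power series, $$\tan x=\sum_{k=0}^{\infty}\frac{|c_{\Delta_k}|}{(2k+1)!}\,x^{2k+1}.$$
   Context: A labeled graph with $V$ vertices and $E$ edges is a map $s:\{1,\ldots,E\}\to\mathcal{P}_2\{1,\ldots,V\}$; edges $\{i,j\}$, $i<j$, are oriented $i\to j$. $c_\Gamma:=\sum_{\sigma\in S_V}\prod_{e:\,i\to j}\operatorname{sign}(\sigma(j)-\sigma(i))$ (its absolute value does not depend on the labeling). *)

theory Defs
  imports "HOL-Computational_Algebra.Formal_Power_Series" "HOL-Combinatorics.Permutations"
begin

text \<open>A labeled graph on vertices 1..V with edges given as the list es; the m-th entry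
  (i, j) of es, with i < j, is the edge {i, j} oriented i -> j.\<close>
definition graph_c :: "nat \<Rightarrow> (nat \<times> nat) list \<Rightarrow> int" where
  "graph_c V es = (\<Sum>\<sigma> | \<sigma> permutes {1..V}.
      prod_list (map (\<lambda>(i, j). sgn (int (\<sigma> j) - int (\<sigma> i))) es))"

definition path_vertices :: "nat \<Rightarrow> nat" where
  "path_vertices k = 2 * k + 1"

definition path_edges :: "nat \<Rightarrow> (nat \<times> nat) list" where
  "path_edges k = map (\<lambda>m. (m, m + 1)) [1..<2 * k + 1]"

end

theory Submission
  imports Defs "HOL-Combinatorics.Multiset_Permutations"
begin

text \<open>
  Let c(n) be the invariant of the path on n vertices. A labelling of the path is a word in its
  labels, and the product over the edges is the product of the signs of the successive
  differences of that word. Cutting every word at its largest letter gives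
  c(n+1) = sum_j (n choose j) c(j) c(n-j) e(j), where e(n) = 1 and e(j) = -1 otherwise, because
  the edge entering the maximum rises and the edge leaving it falls. For the exponential
  generating function R of c this says R' = 2R - R^2, so R - 1 solves y' = 1 - y^2, y(0) = 0,
  i.e. R - 1 = tanh. Comparing coefficients with tan' = 1 + tan^2 shows that for odd n,
  c(n) = (-1)^((n-1)/2) n! [x^n] tan x, and these tangent numbers are nonnegative.
\<close>

lemma sum_Pow_card:
  fixes f :: "nat \<Rightarrow> 'a::comm_semiring_1"
  assumes "finite B"
  shows "(\<Sum>S\<in>Pow B. f (card S)) = (\<Sum>j\<le>card B. of_nat (card B choose j) * f j)"
proof -
  have "(\<Sum>S\<in>Pow B. f (card S)) = (\<Sum>j\<le>card B. \<Sum>S\<in>{S \<in> Pow B. card S = j}. f (card S))"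
    using assms by (intro sum.group[symmetric]) (auto intro: card_mono)
  also have "\<dots> = (\<Sum>j\<le>card B. of_nat (card B choose j) * f j)"
  proof (intro sum.cong refl)
    fix j
    have "(\<Sum>S\<in>{S \<in> Pow B. card S = j}. f (card S)) = (\<Sum>S\<in>{S. S \<subseteq> B \<and> card S = j}. f j)"
      by (intro sum.cong) auto
    then show "(\<Sum>S\<in>{S \<in> Pow B. card S = j}. f (card S)) = of_nat (card B choose j) * f j"
      using n_subsets[OF assms, of j] by simp
  qed
  finally show ?thesis .
qed

lemma bij_betw_map_permutes:
  assumes "distinct xs"
  shows "bij_betw (\<lambda>\<sigma>. map \<sigma> xs) {\<sigma>. \<sigma> permutes set xs} (permutations_of_set (set xs))"
proof (rule bij_betw_imageI)
  show "inj_on (\<lambda>\<sigma>. map \<sigma> xs) {\<sigma>. \<sigma> permutes set xs}"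
  proof (rule inj_onI, rule ext)
    fix \<sigma> \<tau> x
    assume "\<sigma> \<in> {\<sigma>. \<sigma> permutes set xs}" "\<tau> \<in> {\<sigma>. \<sigma> permutes set xs}" "map \<sigma> xs = map \<tau> xs"
    then show "\<sigma> x = \<tau> x"
      by (cases "x \<in> set xs") (auto simp: permutes_not_in)
  qed
  show "(\<lambda>\<sigma>. map \<sigma> xs) ` {\<sigma>. \<sigma> permutes set xs} = permutations_of_set (set xs)"
  proof (intro equalityI subsetI)
    fix ys
    assume "ys \<in> (\<lambda>\<sigma>. map \<sigma> xs) ` {\<sigma>. \<sigma> permutes set xs}"
    then obtain \<sigma> where "\<sigma> permutes set xs" "ys = map \<sigma> xs"
      by blast
    moreover have "xs \<in> permutations_of_set (set xs)"
      using assms by (rule permutations_of_setI[OF refl])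
    ultimately show "ys \<in> permutations_of_set (set xs)"
      using permutations_of_set_image_permutes by blast
  next
    fix ys
    assume ys: "ys \<in> permutations_of_set (set xs)"
    then have "length ys = length xs"
      using assms by (metis distinct_card permutations_of_setD)
    define \<sigma> where "\<sigma> = permutation_of_list (zip xs ys)"
    have "list_permutes (zip xs ys) (set xs)"
      using ys assms \<open>length ys = length xs\<close> by (auto dest: permutations_of_setD)
    then have "\<sigma> permutes set xs"
      by (simp add: \<sigma>_def)
    moreover have "map \<sigma> xs = ys"
    proof (rule nth_equalityI)
      fix i
      assume "i < length (map \<sigma> xs)"
      then have "(xs ! i, ys ! i) \<in> set (zip xs ys)"
        using \<open>length ys = length xs\<close> by (auto simp: in_set_zip)
      then show "map \<sigma> xs ! i = ys ! i"
        using assms \<open>length ys = length xs\<close> \<open>i < length (map \<sigma> xs)\<close>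
        by (simp add: \<sigma>_def permutation_of_list_unique')
    qed (simp add: \<open>length ys = length xs\<close>)
    ultimately show "ys \<in> (\<lambda>\<sigma>. map \<sigma> xs) ` {\<sigma>. \<sigma> permutes set xs}"
      by blast
  qed
qed

lemma bij_betw_append_Cons_permutations_of_set:
  assumes "M \<notin> B"
  shows "bij_betw (\<lambda>(S, ys, zs). ys @ M # zs)
           (SIGMA S:Pow B. permutations_of_set S \<times> permutations_of_set (B - S))
           (permutations_of_set (insert M B))"
    (is "bij_betw ?h ?Sig _")
proof (rule bij_betw_imageI)
  show "inj_on ?h ?Sig"
  proof (rule inj_onI)
    fix p q
    assume "p \<in> ?Sig" "q \<in> ?Sig" and eq: "?h p = ?h q"
    then obtain S ys zs S' ys' zs' where pq: "p = (S, ys, zs)" "q = (S', ys', zs')"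
      and "S \<subseteq> B" "ys \<in> permutations_of_set S" "zs \<in> permutations_of_set (B - S)"
      and "S' \<subseteq> B" "ys' \<in> permutations_of_set S'" "zs' \<in> permutations_of_set (B - S')"
      by auto
    then have "M \<notin> set ys" "M \<notin> set zs" "S = set ys" "S' = set ys'"
      using assms by (auto simp: permutations_of_set_def)
    with eq show "p = q"
      unfolding pq using append_Cons_eq_iff[of M ys zs ys' zs'] by auto
  qed
  show "?h ` ?Sig = permutations_of_set (insert M B)"
  proof (intro equalityI subsetI)
    fix xs
    assume "xs \<in> ?h ` ?Sig"
    then show "xs \<in> permutations_of_set (insert M B)"
      using assms by (auto simp: permutations_of_set_def)
  next
    fix xs
    assume xs: "xs \<in> permutations_of_set (insert M B)"
    then obtain ys zs where split: "xs = ys @ M # zs"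
      by (metis insertI1 permutations_of_setD(1) split_list)
    with xs assms have preimage: "(set ys, ys, zs) \<in> ?Sig"
      by (auto simp: permutations_of_set_def)
    show "xs \<in> ?h ` ?Sig"
      by (rule rev_image_eqI[OF preimage]) (simp add: split)
  qed
qed

fun path_sign :: "nat list \<Rightarrow> int" where
  "path_sign (x # y # zs) = sgn (int y - int x) * path_sign (y # zs)"
| "path_sign _ = 1"

lemma path_sign_append_Cons_max:
  assumes "\<forall>y\<in>set ys. y < M" and "\<forall>z\<in>set zs. z < M"
  shows "path_sign (ys @ M # zs) = path_sign ys * path_sign zs * (if zs = [] then 1 else -1)"
proof -
  have "path_sign (M # zs) = path_sign zs * (if zs = [] then 1 else -1)"
    using assms(2) by (cases zs) auto
  with assms(1) show ?thesis
    by (induction ys rule: path_sign.induct) simp_all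
qed

definition path_sign_sum :: "nat set \<Rightarrow> int" where
  "path_sign_sum A = (\<Sum>xs\<in>permutations_of_set A. path_sign xs)"

lemma path_sign_sum_insert_max:
  assumes "finite B" and "\<forall>x\<in>B. x < M"
  shows "path_sign_sum (insert M B) =
           (\<Sum>S\<in>Pow B. path_sign_sum S * path_sign_sum (B - S) * (if S = B then 1 else -1))"
proof -
  let ?P = "\<lambda>S. permutations_of_set S \<times> permutations_of_set (B - S)"
  have "M \<notin> B"
    using assms(2) by blast
  have "path_sign_sum (insert M B) = (\<Sum>(S, ys, zs)\<in>(SIGMA S:Pow B. ?P S). path_sign (ys @ M # zs))"
    unfolding path_sign_sum_def
    using sum.reindex_bij_betw[OF bij_betw_append_Cons_permutations_of_set[OF \<open>M \<notin> B\<close>], of path_sign]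
    by (simp add: case_prod_beta)
  also have "\<dots> = (\<Sum>S\<in>Pow B. \<Sum>(ys, zs)\<in>?P S. path_sign (ys @ M # zs))"
    using assms(1) by (subst sum.Sigma) (auto intro: finite_subset)
  also have "\<dots> = (\<Sum>S\<in>Pow B. \<Sum>(ys, zs)\<in>?P S. path_sign ys * path_sign zs * (if S = B then 1 else -1))"
  proof -
    have split_sign: "path_sign (ys @ M # zs) = path_sign ys * path_sign zs * (if S = B then 1 else -1)"
      if "S \<in> Pow B" "(ys, zs) \<in> ?P S" for S ys zs
    proof -
      from that have "set ys = S" "set zs = B - S" "S \<subseteq> B"
        by (auto dest: permutations_of_setD)
      with assms(2) show ?thesis
        by (subst path_sign_append_Cons_max) auto
    qed
    then show ?thesis
      by (intro sum.cong refl) (auto simp only: split: prod.splits)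
  qed
  also have "\<dots> = (\<Sum>S\<in>Pow B. path_sign_sum S * path_sign_sum (B - S) * (if S = B then 1 else -1))"
  proof (intro sum.cong refl)
    fix S
    let ?sgn = "if S = B then 1 else -1 :: int"
    have "(\<Sum>(ys, zs)\<in>?P S. path_sign ys * path_sign zs * ?sgn) =
        (\<Sum>(ys, zs)\<in>?P S. path_sign ys * path_sign zs) * ?sgn"
      by (simp only: sum_distrib_right case_prod_unfold)
    also have "(\<Sum>(ys, zs)\<in>?P S. path_sign ys * path_sign zs) = path_sign_sum S * path_sign_sum (B - S)"
      unfolding path_sign_sum_def sum_product sum.cartesian_product ..
    finally show "(\<Sum>(ys, zs)\<in>?P S. path_sign ys * path_sign zs * ?sgn) =
        path_sign_sum S * path_sign_sum (B - S) * ?sgn" .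
  qed
  finally show ?thesis .
qed

definition path_c :: "nat \<Rightarrow> int" where
  "path_c n = path_sign_sum {..<n}"

lemma path_sign_sum_Suc_card:
  assumes "finite A" and "card A = Suc n"
    and IH: "\<And>S. finite S \<Longrightarrow> card S \<le> n \<Longrightarrow> path_sign_sum S = path_c (card S)"
  shows "path_sign_sum A =
           (\<Sum>j\<le>n. int (n choose j) * (path_c j * path_c (n - j) * (if j = n then 1 else -1)))"
proof -
  let ?f = "\<lambda>j. path_c j * path_c (n - j) * (if j = n then 1 else -1)"
  define B where "B = A - {Max A}"
  have "A \<noteq> {}"
    using assms(2) by auto
  then have "Max A \<in> A"
    using assms(1) by simp
  then have A: "A = insert (Max A) B"
    by (auto simp: B_def)
  have "\<forall>x\<in>B. x < Max A"
    using assms(1) by (auto simp: B_def intro: order.not_eq_order_implies_strict)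
  have "finite B" "card B = n"
    using assms(1,2) \<open>A \<noteq> {}\<close> by (simp_all add: B_def)
  have "path_sign_sum A =
      (\<Sum>S\<in>Pow B. path_sign_sum S * path_sign_sum (B - S) * (if S = B then 1 else -1))"
    by (subst A) (rule path_sign_sum_insert_max[OF \<open>finite B\<close> \<open>\<forall>x\<in>B. x < Max A\<close>])
  also have "\<dots> = (\<Sum>S\<in>Pow B. ?f (card S))"
  proof (intro sum.cong refl)
    fix S
    assume "S \<in> Pow B"
    then have "S \<subseteq> B"
      by simp
    then have "finite S"
      using \<open>finite B\<close> by (rule finite_subset)
    have "card S \<le> n" "card (B - S) = n - card S" "S = B \<longleftrightarrow> card S = n"
      using \<open>S \<subseteq> B\<close> \<open>finite S\<close> \<open>finite B\<close> \<open>card B = n\<close>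
      by (auto simp: card_mono card_Diff_subset dest: card_subset_eq)
    then show "path_sign_sum S * path_sign_sum (B - S) * (if S = B then 1 else -1) = ?f (card S)"
      using IH[OF \<open>finite S\<close>] IH[of "B - S"] \<open>finite B\<close> by simp
  qed
  also have "\<dots> = (\<Sum>j\<le>n. int (n choose j) * ?f j)"
    using sum_Pow_card[OF \<open>finite B\<close>, of ?f] \<open>card B = n\<close> by simp
  finally show ?thesis .
qed

lemma path_sign_sum_eq_path_c: "finite A \<Longrightarrow> path_sign_sum A = path_c (card A)"
proof (induction "card A" arbitrary: A rule: less_induct)
  case less
  show ?case
  proof (cases "card A")
    case 0
    with less.prems show ?thesis
      by (simp add: path_c_def)
  next
    case (Suc n)
    have IH: "path_sign_sum S = path_c (card S)" if "finite S" "card S \<le> n" for S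
      using less.hyps[of S] that Suc by simp
    show ?thesis
      using path_sign_sum_Suc_card[OF less.prems Suc IH]
        path_sign_sum_Suc_card[of "{..<Suc n}" n, OF _ _ IH] Suc
      by (simp add: path_c_def)
  qed
qed

lemma path_c_0: "path_c 0 = 1"
  by (simp add: path_c_def path_sign_sum_def)

lemma path_c_Suc:
  "path_c (Suc n) = (\<Sum>j\<le>n. int (n choose j) * (path_c j * path_c (n - j) * (if j = n then 1 else -1)))"
  unfolding path_c_def[of "Suc n"]
  by (rule path_sign_sum_Suc_card) (simp_all add: path_sign_sum_eq_path_c)

lemma prod_list_sgn_path_edges:
  "prod_list (map (\<lambda>(i, j). sgn (int (\<sigma> j) - int (\<sigma> i))) (map (\<lambda>m. (m, m + 1)) [a..<b])) =
     path_sign (map \<sigma> [a..<Suc b])"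
proof (induction "b - a" arbitrary: a)
  case 0
  then show ?case
    by (cases "a = b") simp_all
next
  case (Suc d)
  then have "a < b"
    by simp
  have IH: "prod_list (map (\<lambda>(i, j). sgn (int (\<sigma> j) - int (\<sigma> i))) (map (\<lambda>m. (m, m + 1)) [Suc a..<b])) =
      path_sign (map \<sigma> [Suc a..<Suc b])"
    by (rule Suc.hyps(1)) (use Suc.hyps(2) in arith)
  have lists: "[a..<b] = a # [Suc a..<b]" "[a..<Suc b] = a # [Suc a..<Suc b]"
      "[Suc a..<Suc b] = Suc a # [Suc (Suc a)..<Suc b]"
    using \<open>a < b\<close> by (simp_all add: upt_conv_Cons del: upt_Suc)
  show ?case
    unfolding lists(1,2) list.map prod_list.Cons IH lists(3) by simp
qed

lemma graph_c_path: "graph_c n (map (\<lambda>m. (m, m + 1)) [1..<n]) = path_c n"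
proof -
  have upt: "set [1..<Suc n] = {1..n}"
    by auto
  have "graph_c n (map (\<lambda>m. (m, m + 1)) [1..<n]) =
      (\<Sum>\<sigma> | \<sigma> permutes {1..n}. path_sign (map \<sigma> [1..<Suc n]))"
    unfolding graph_c_def prod_list_sgn_path_edges ..
  also have "\<dots> = path_sign_sum {1..n}"
    using sum.reindex_bij_betw[OF bij_betw_map_permutes[OF distinct_upt[of 1 "Suc n"]], of path_sign]
    unfolding upt path_sign_sum_def .
  also have "\<dots> = path_c n"
    by (simp add: path_sign_sum_eq_path_c)
  finally show ?thesis .
qed

lemma fps_deriv_fps_tan:
  fixes c :: "'a::field_char_0"
  shows "fps_deriv (fps_tan c) = fps_const c * (1 + (fps_tan c)\<^sup>2)"
proof -
  have cos0: "fps_nth (fps_cos c) 0 \<noteq> 0"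
    by simp
  then have "fps_cos c \<noteq> 0"
    by (intro notI) simp
  have "fps_tan c * fps_cos c = fps_sin c"
    using cos0 by (simp add: fps_tan_def fps_divide_unit mult.assoc inverse_mult_eq_1)
  then have "(1 + (fps_tan c)\<^sup>2) * (fps_cos c)\<^sup>2 = (fps_cos c)\<^sup>2 + (fps_sin c)\<^sup>2"
    by (simp add: algebra_simps power2_eq_square)
  then have "(1 + (fps_tan c)\<^sup>2) * (fps_cos c)\<^sup>2 = 1"
    by (simp add: fps_sin_cos_sum_of_squares)
  then have "fps_deriv (fps_tan c) = fps_const c * (1 + (fps_tan c)\<^sup>2) * (fps_cos c)\<^sup>2 / (fps_cos c)\<^sup>2"
    by (simp add: fps_tan_deriv mult.assoc)
  then show ?thesis
    using \<open>fps_cos c \<noteq> 0\<close> by simp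
qed

definition tan_number :: "nat \<Rightarrow> real" where
  "tan_number n = fact n * fps_nth (fps_tan 1) n"

lemma tan_number_0: "tan_number 0 = 0"
  by (simp add: tan_number_def fps_tan_def fps_divide_unit)

lemma tan_number_Suc:
  "tan_number (Suc n) = of_bool (n = 0) + (\<Sum>i\<le>n. real (n choose i) * tan_number i * tan_number (n - i))"
proof -
  let ?t = "fps_nth (fps_tan (1::real))"
  have "fps_nth (fps_deriv (fps_tan (1::real))) n = fps_nth (1 + (fps_tan 1)\<^sup>2) n"
    by (simp add: fps_deriv_fps_tan)
  then have ode: "real (Suc n) * ?t (Suc n) = of_bool (n = 0) + (\<Sum>i\<le>n. ?t i * ?t (n - i))"
    by (simp add: power2_eq_square fps_mult_nth atLeast0AtMost add.commute)
  have binomial: "fact n * (?t i * ?t (n - i)) = real (n choose i) * tan_number i * tan_number (n - i)"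
    if "i \<le> n" for i
  proof -
    have "fact i * fact (n - i) * real (n choose i) = (fact n :: real)"
      using binomial_fact_lemma[OF that] by (metis of_nat_fact of_nat_mult)
    then show ?thesis
      unfolding tan_number_def by (simp add: algebra_simps)
  qed
  have "tan_number (Suc n) = fact n * (real (Suc n) * ?t (Suc n))"
    by (simp add: tan_number_def del: of_nat_Suc)
  also have "\<dots> = of_bool (n = 0) + (\<Sum>i\<le>n. fact n * (?t i * ?t (n - i)))"
    unfolding ode by (simp add: distrib_left sum_distrib_left of_bool_def)
  also have "\<dots> = of_bool (n = 0) + (\<Sum>i\<le>n. real (n choose i) * tan_number i * tan_number (n - i))"
    using binomial by simp
  finally show ?thesis .
qed

lemma tan_number_nonneg: "tan_number n \<ge> 0"
proof (induction n rule: less_induct)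
  case (less n)
  then show ?case
    by (cases n) (auto simp: tan_number_0 tan_number_Suc intro!: add_nonneg_nonneg sum_nonneg)
qed

lemma tan_number_even: "even n \<Longrightarrow> tan_number n = 0"
proof (induction n rule: less_induct)
  case (less n)
  show ?case
  proof (cases n)
    case 0
    then show ?thesis
      by (simp add: tan_number_0)
  next
    case (Suc m)
    with less.prems have "odd m"
      by simp
    have "real (m choose i) * tan_number i * tan_number (m - i) = 0" if "i \<le> m" for i
      using less.IH[of i] less.IH[of "m - i"] Suc that \<open>odd m\<close> by (cases "even i") auto
    then have "(\<Sum>i\<le>m. real (m choose i) * tan_number i * tan_number (m - i)) = 0"
      by (intro sum.neutral) blast
    moreover have "m \<noteq> 0"
      using odd_pos[OF \<open>odd m\<close>] by simp
    ultimately show ?thesis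
      using Suc by (simp add: tan_number_Suc)
  qed
qed

text \<open>Because tanh x = -i tan (i x) and tan is odd, this is n! [x^n] tanh x.\<close>

definition tanh_number :: "nat \<Rightarrow> real" where
  "tanh_number n = (-1) ^ (n div 2) * tan_number n"

lemma tanh_number_Suc:
  "tanh_number (Suc m) =
     of_bool (m = 0) - (\<Sum>j\<le>m. real (m choose j) * tanh_number j * tanh_number (m - j))"
proof (cases "even m")
  case True
  have "real (m choose j) * tanh_number j * tanh_number (m - j) =
      - ((-1) ^ (m div 2) * (real (m choose j) * tan_number j * tan_number (m - j)))"
    if "j \<le> m" for j
  proof (cases "even j")
    case True
    then show ?thesis
      by (simp add: tanh_number_def tan_number_even)
  next
    case False
    with \<open>even m\<close> that have "odd (m - j)"
      by simp
    with \<open>even m\<close> \<open>odd j\<close> have "m div 2 = j div 2 + (m - j) div 2 + 1"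
      using even_two_times_div_two[of m] odd_two_times_div_two_succ[of j]
        odd_two_times_div_two_succ[of "m - j"] that
      by linarith
    then have sign: "(-1::real) ^ (j div 2) * (-1) ^ ((m - j) div 2) = - ((-1) ^ (m div 2))"
      by (simp add: power_add)
    have "real (m choose j) * tanh_number j * tanh_number (m - j) =
        real (m choose j) * tan_number j * tan_number (m - j) * ((-1) ^ (j div 2) * (-1) ^ ((m - j) div 2))"
      by (simp add: tanh_number_def mult_ac)
    then show ?thesis
      by (simp add: sign)
  qed
  then have "(\<Sum>j\<le>m. real (m choose j) * tanh_number j * tanh_number (m - j)) =
      - ((-1) ^ (m div 2) * (\<Sum>j\<le>m. real (m choose j) * tan_number j * tan_number (m - j)))"
    by (simp add: sum_negf sum_distrib_left)
  moreover have "Suc m div 2 = m div 2"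
    using True by simp
  ultimately show ?thesis
    by (cases "m = 0") (simp_all add: tanh_number_def tan_number_Suc distrib_left)
next
  case False
  have "real (m choose j) * tanh_number j * tanh_number (m - j) = 0" if "j \<le> m" for j
    using False that by (cases "even j") (auto simp: tanh_number_def tan_number_even)
  then have "(\<Sum>j\<le>m. real (m choose j) * tanh_number j * tanh_number (m - j)) = 0"
    by (intro sum.neutral) blast
  moreover have "m \<noteq> 0"
    using odd_pos[of m] False by simp
  ultimately show ?thesis
    using False by (simp add: tanh_number_def tan_number_even)
qed


lemma path_c_eq_tanh_number: "real_of_int (path_c n) = tanh_number n + of_bool (n = 0)"
proof (induction n rule: less_induct)
  case (less n)
  show ?case
  proof (cases n)
    case 0
    then show ?thesis
      by (simp add: path_c_0 tanh_number_def tan_number_0)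
  next
    case (Suc m)
    let ?t = tanh_number
    have "?t 0 = 0"
      by (simp add: tanh_number_def tan_number_0)
    have IH: "real_of_int (path_c j) = ?t j + of_bool (j = 0)" if "j \<le> m" for j
      using less.IH[of j] Suc that by simp
    have summand: "real_of_int (int (m choose j) * (path_c j * path_c (m - j) * (if j = m then 1 else -1))) =
        of_bool (j = m) * ?t m - of_bool (j = 0) * ?t m + of_bool (j = 0 \<and> j = m)
          - real (m choose j) * ?t j * ?t (m - j)"
      if "j \<le> m" for j
      using IH[of j] IH[of "m - j"] that \<open>?t 0 = 0\<close>
      by (cases "j = 0"; cases "j = m") (simp_all add: algebra_simps)
    have "real_of_int (path_c n) =
        (\<Sum>j\<le>m. of_bool (j = m) * ?t m - of_bool (j = 0) * ?t m + of_bool (j = 0 \<and> j = m)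
          - real (m choose j) * ?t j * ?t (m - j))"
      unfolding Suc path_c_Suc of_int_sum by (intro sum.cong refl) (rule summand, simp)
    also have "\<dots> = of_bool (m = 0) - (\<Sum>j\<le>m. real (m choose j) * ?t j * ?t (m - j))"
      by (auto simp: sum.distrib sum_subtractf)
    also have "\<dots> = ?t n"
      by (simp add: Suc tanh_number_Suc)
    finally show ?thesis
      using Suc by simp
  qed
qed

lemma abs_path_c_odd: "odd n \<Longrightarrow> real_of_int \<bar>path_c n\<bar> = tan_number n"
  using path_c_eq_tanh_number[of n] tan_number_nonneg[of n]
  by (auto simp: tanh_number_def abs_mult)

theorem mainTheorem11:
  shows "fps_tan (1::real) =
    Abs_fps (\<lambda>n. if odd n
      then of_int \<bar>graph_c (path_vertices ((n - 1) div 2)) (path_edges ((n - 1) div 2))\<bar> / fact n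
      else 0)"
proof (rule fps_ext)
  fix n
  have coeff: "fps_nth (fps_tan (1::real)) n = tan_number n / fact n"
    by (simp add: tan_number_def)
  show "fps_nth (fps_tan (1::real)) n = fps_nth (Abs_fps (\<lambda>n. if odd n
      then of_int \<bar>graph_c (path_vertices ((n - 1) div 2)) (path_edges ((n - 1) div 2))\<bar> / fact n
      else 0)) n"
  proof (cases "odd n")
    case True
    then have "2 * ((n - 1) div 2) + 1 = n"
      using odd_two_times_div_two_nat[of n] odd_pos[of n] by simp
    then have "graph_c (path_vertices ((n - 1) div 2)) (path_edges ((n - 1) div 2)) = path_c n"
      using graph_c_path[of n] by (simp add: path_vertices_def path_edges_def)
    then show ?thesis
      using True coeff abs_path_c_odd[OF True] by simp
  next
    case False
    then show ?thesis
      using coeff tan_number_even[of n] by simp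
  qed
qed

end
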